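(* Let $R\in\mathbb{R}[x]$, $\delta\in\mathbb{R}$, and $Q=R\circ x^2\circ(x-\delta)$, with $n=\deg Q$. 1) If $n\ge6$ and $Ch_2(Q)=Ch_3(Q)=0$, then $4\delta$ is not an algebraic integer unless $\delta=0$. 2) If $n\ge9$ and $Ch_2(Q)=Ch_4(Q)=Ch_5(Q)=0$, then $4\delta$ is not an algebraic integer unless $\delta=0$.
   Context: $T_k$ denotes the Chebyshev polynomial of the first kind of degree $k$, $T_k(\cos\phi)=\cos(k\phi)$. Every real polynomial $Q$ of degree $n$ can be uniquely written as $Q=\sum_{k=0}^n d_kT_k$ with $d_k\in\mathbb{R}$; set $Ch_i(Q)=d_{n-i}$ for $0\le i\le n$. An algebraic integer is a complex root of a monic polynomial with integer coefficients. $Q(x)=R((x-\delta)^2)$. *)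

theory Defs
  imports "HOL-Computational_Algebra.Polynomial" Complex_Main
begin

fun cheb_T :: "nat \<Rightarrow> real poly" where
  "cheb_T 0 = 1"
| "cheb_T (Suc 0) = [:0, 1:]"
| "cheb_T (Suc (Suc k)) = [:0, 2:] * cheb_T (Suc k) - cheb_T k"

definition cheb_coeffs :: "real poly \<Rightarrow> nat \<Rightarrow> real" where
  "cheb_coeffs Q = (THE d. (\<forall>k>degree Q. d k = 0) \<and>
       Q = (\<Sum>k\<le>degree Q. smult (d k) (cheb_T k)))"

text \<open>Ch_i(Q) = d_{n-i}, meaningful for 0 \<le> i \<le> n.\<close>
definition Ch :: "nat \<Rightarrow> real poly \<Rightarrow> real" where
  "Ch i Q = cheb_coeffs Q (degree Q - i)"

end

theory Submission
  imports Defs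
begin

(* Write n = deg Q = m + 6 (n is even, so m is even) and c_k = cheb_coeffs Q (m + k), so
   that Ch_i(Q) = c_(6-i).  Two independent descriptions of the top coefficients of Q are
   compared:
   (a) Expanding Q in the Chebyshev basis, the monomial coefficients q_(m+1),...,q_(m+6)
       are explicit linear combinations of c_1,...,c_6, because T_k has only the monomials
       x^k, x^(k-2), x^(k-4), ... with known leading coefficients.
   (b) Q(x + delta) = R(x^2) is an even polynomial, so its coefficients of x^(m+5), x^(m+3),
       x^(m+1) vanish; by Taylor's formula these are linear in q_(m+1),...,q_(m+6).
   Eliminating the c_k (with c_6 <> 0 and delta <> 0) gives, with u = (4 delta)^2,
     if Ch_2 = Ch_3 = 0:         (m+4)(m+5) u = 12,
     if Ch_2 = Ch_4 = Ch_5 = 0:  120 - 30(m+4)(m+3) u + (m+5)(m+4)(m+3)(m+2) u^2 = 0.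
   Finally u is an algebraic integer if 4 delta is, and neither relation has an algebraic
   integer solution: a rational algebraic integer is an integer, and an irrational algebraic
   integer root of A u^2 + B u + C (A, B, C integers) forces A to divide C (Gauss' lemma). *)


section \<open>Monomial coefficients of the Chebyshev polynomials\<close>

text \<open>The three-term recursion read coefficientwise; afterwards the recursion is only used
  in this form, so the defining equation is removed from the simpset.\<close>
lemma coeff_cheb_T_Suc_Suc:
  "coeff (cheb_T (Suc (Suc k))) j
     = (case j of 0 \<Rightarrow> 0 | Suc i \<Rightarrow> 2 * coeff (cheb_T (Suc k)) i) - coeff (cheb_T k) j"
  by (simp add: coeff_pCons split: nat.split)

declare cheb_T.simps(3) [simp del]

lemma coeff_cheb_T_above: "k < j \<Longrightarrow> coeff (cheb_T k) j = 0"
proof (induction k arbitrary: j rule: cheb_T.induct)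
  case 3 then show ?case by (simp add: coeff_cheb_T_Suc_Suc split: nat.splits)
qed (simp_all add: coeff_pCons split: nat.splits)

lemma cheb_T_degree: "degree (cheb_T k) \<le> k"
  by (rule degree_le) (auto intro: coeff_cheb_T_above)

lemma coeff_cheb_T_parity: "odd (k + j) \<Longrightarrow> coeff (cheb_T k) j = 0"
proof (induction k arbitrary: j rule: cheb_T.induct)
  case 1 then show ?case by (cases j) simp_all
next
  case 2 then show ?case by (auto simp: coeff_pCons split: nat.splits)
next
  case 3 then show ?case by (auto simp: coeff_cheb_T_Suc_Suc split: nat.splits)
qed

lemma coeff_cheb_T_top: "coeff (cheb_T (Suc k)) (Suc k) = 2 ^ k"
  by (induction k) (simp_all add: coeff_cheb_T_Suc_Suc coeff_cheb_T_above)

lemma coeff_cheb_T_top_nonzero: "coeff (cheb_T k) k \<noteq> 0"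
  by (cases k) (simp_all add: coeff_cheb_T_top)

lemma coeff_cheb_T_top_minus_2: "coeff (cheb_T (k + 3)) (k + 1) = - (real k + 3) * 2 ^ k"
proof (induction k)
  case 0 show ?case by (simp add: numeral_3_eq_3 coeff_cheb_T_Suc_Suc)
next
  case (Suc k)
  have "coeff (cheb_T (Suc k + 3)) (Suc k + 1)
        = 2 * coeff (cheb_T (k + 3)) (k + 1) - coeff (cheb_T (Suc (Suc k))) (Suc (Suc k))"
    by (simp add: coeff_cheb_T_Suc_Suc numeral_3_eq_3)
  then show ?case using Suc by (simp add: coeff_cheb_T_top algebra_simps)
qed

lemma coeff_cheb_T_top_minus_4:
  "coeff (cheb_T (k + 5)) (k + 1) = (real k + 5) * (real k + 2) * 2 ^ k / 2"
proof (induction k)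
  case 0 show ?case by (simp add: eval_nat_numeral coeff_cheb_T_Suc_Suc)
next
  case (Suc k)
  have "coeff (cheb_T (Suc k + 5)) (Suc k + 1)
        = 2 * coeff (cheb_T (k + 5)) (k + 1) - coeff (cheb_T (Suc k + 3)) (Suc k + 1)"
    by (simp add: coeff_cheb_T_Suc_Suc eval_nat_numeral)
  then show ?case using Suc by (simp only: coeff_cheb_T_top_minus_2) (simp add: algebra_simps)
qed


section \<open>The Chebyshev expansion\<close>

lemma triangular_basis_expansion:
  fixes b :: "nat \<Rightarrow> 'a::field poly"
  assumes deg: "\<And>k. degree (b k) \<le> k" and top: "\<And>k. coeff (b k) k \<noteq> 0"
    and "degree p \<le> N"
  shows "\<exists>d. (\<forall>k>N. d k = 0) \<and> p = (\<Sum>k\<le>N. smult (d k) (b k))"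
  using \<open>degree p \<le> N\<close>
proof (induction N arbitrary: p)
  case 0
  have "p = [:coeff p 0:]" "b 0 = [:coeff (b 0) 0:]"
    using 0 deg[of 0] by (simp_all add: degree_0_id)
  then have "p = smult (coeff p 0 / coeff (b 0) 0) (b 0)"
    using top[of 0] by (metis nonzero_eq_divide_eq smult_pCons smult_0_right)
  then show ?case
    by (intro exI[of _ "\<lambda>k. if k = 0 then coeff p 0 / coeff (b 0) 0 else 0"]) auto
next
  case (Suc N)
  define c where "c = coeff p (Suc N) / coeff (b (Suc N)) (Suc N)"
  define p' where "p' = p - smult c (b (Suc N))"
  have "degree p' \<le> N"
  proof (rule degree_le, intro allI impI)
    fix i assume "N < i"
    then consider "i = Suc N" | "Suc N < i" by linarith
    then show "coeff p' i = 0"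
    proof cases
      case 1 then show ?thesis using top[of "Suc N"] by (simp add: p'_def c_def)
    next
      case 2 then show ?thesis
        using Suc.prems deg[of "Suc N"] by (simp add: p'_def coeff_eq_0)
    qed
  qed
  with Suc.IH obtain d where d: "\<forall>k>N. d k = 0" "p' = (\<Sum>k\<le>N. smult (d k) (b k))"
    by blast
  have "p = (\<Sum>k\<le>Suc N. smult ((d(Suc N := c)) k) (b k))"
    using d(2) by (simp add: p'_def diff_eq_eq)
  moreover have "\<forall>k>Suc N. (d(Suc N := c)) k = 0" using d(1) by auto
  ultimately show ?case by blast
qed

lemma triangular_basis_independent:
  fixes b :: "nat \<Rightarrow> 'a::field poly"
  assumes deg: "\<And>k. degree (b k) \<le> k" and top: "\<And>k. coeff (b k) k \<noteq> 0"
    and zero: "(\<Sum>k\<le>N. smult (e k) (b k)) = 0"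
  shows "\<forall>k\<le>N. e k = 0"
  using zero
proof (induction N)
  case 0 then show ?case using top[of 0] by auto
next
  case (Suc N)
  have "coeff (b k) (Suc N) = 0" if "k \<le> N" for k
    using deg[of k] that by (intro coeff_eq_0) linarith
  then have "coeff (\<Sum>k\<le>Suc N. smult (e k) (b k)) (Suc N) = e (Suc N) * coeff (b (Suc N)) (Suc N)"
    by (simp add: coeff_sum)
  then have eN: "e (Suc N) = 0" using Suc.prems top[of "Suc N"] by (simp only: coeff_0) simp
  then have "(\<Sum>k\<le>N. smult (e k) (b k)) = 0" using Suc.prems by simp
  then show ?case using Suc.IH eN le_Suc_eq by blast
qed

lemma cheb_coeffs_spec:
  "(\<forall>k>degree Q. cheb_coeffs Q k = 0) \<and> Q = (\<Sum>k\<le>degree Q. smult (cheb_coeffs Q k) (cheb_T k))"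
proof -
  let ?P = "\<lambda>d. (\<forall>k>degree Q. d k = 0) \<and> Q = (\<Sum>k\<le>degree Q. smult (d k) (cheb_T k))"
  have "\<exists>!d. ?P d"
  proof (rule ex_ex1I)
    show "\<exists>d. ?P d"
      by (rule triangular_basis_expansion[OF cheb_T_degree coeff_cheb_T_top_nonzero order_refl])
  next
    fix d d' assume "?P d" "?P d'"
    then have "(\<Sum>k\<le>degree Q. smult (d k - d' k) (cheb_T k)) = 0"
      by (simp add: smult_diff_left sum_subtractf)
    then have "\<forall>k\<le>degree Q. d k - d' k = 0"
      by (rule triangular_basis_independent[OF cheb_T_degree coeff_cheb_T_top_nonzero])
    with \<open>?P d\<close> \<open>?P d'\<close> show "d = d'" by (metis eq_iff_diff_eq_0 not_le ext)
  qed
  then show ?thesis unfolding cheb_coeffs_def by (rule theI')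
qed

lemma cheb_coeffs_above_degree: "degree Q < k \<Longrightarrow> cheb_coeffs Q k = 0"
  using cheb_coeffs_spec[of Q] by blast

lemma coeff_cheb_expansion:
  assumes "degree Q \<le> N"
  shows "coeff Q j = (\<Sum>k\<le>N. cheb_coeffs Q k * coeff (cheb_T k) j)"
proof -
  have "coeff Q j = (\<Sum>k\<le>degree Q. cheb_coeffs Q k * coeff (cheb_T k) j)"
    using arg_cong[OF conjunct2[OF cheb_coeffs_spec[of Q]], of "\<lambda>p. coeff p j"]
    by (simp add: coeff_sum)
  also have "\<dots> = (\<Sum>k\<le>N. cheb_coeffs Q k * coeff (cheb_T k) j)"
    using assms cheb_coeffs_spec[of Q] by (intro sum.mono_neutral_left) auto
  finally show ?thesis .
qed

lemma sum_atMost_shift: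
  fixes f :: "nat \<Rightarrow> 'a::comm_monoid_add"
  assumes "\<And>k. k < j \<Longrightarrow> f k = 0"
  shows "(\<Sum>k\<le>j+t. f k) = (\<Sum>i\<le>t. f (j+i))"
proof (induction t)
  case 0
  have "(\<Sum>k\<le>j. f k) = f j + (\<Sum>k<j. f k)"
    by (simp add: lessThan_Suc_atMost[symmetric] add.commute)
  then show ?case using assms by simp
qed simp

text \<open>Step (a) of the proof: near the top, only T_j, T_(j+2), T_(j+4) contribute to the
  coefficient of x^j.\<close>
lemma coeff_top_in_cheb_basis:
  assumes "1 \<le> j" and "degree Q \<le> j + 5"
  defines "c \<equiv> cheb_coeffs Q"
  shows "coeff Q j = 2 ^ (j - 1) * (c j - (real j + 2) * c (j+2)
                                     + (real j + 4) * (real j + 1) / 2 * c (j+4))"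
proof -
  obtain i where j: "j = i + 1" using assms(1) by (metis add.commute le_iff_add)
  have "coeff Q (i+1) = (\<Sum>k\<le>(i+1)+5. c k * coeff (cheb_T k) (i+1))"
    unfolding c_def by (rule coeff_cheb_expansion) (use assms j in simp)
  also have "\<dots> = (\<Sum>s\<le>5. c (i+1+s) * coeff (cheb_T (i+1+s)) (i+1))"
    by (rule sum_atMost_shift) (simp add: coeff_cheb_T_above)
  also have "\<dots> = c (i+1) * 2^i + c (i+3) * coeff (cheb_T (i+3)) (i+1)
                  + c (i+5) * coeff (cheb_T (i+5)) (i+1)"
  proof -
    have "coeff (cheb_T (i+2)) (i+1) = 0" "coeff (cheb_T (i+4)) (i+1) = 0"
      "coeff (cheb_T (i+6)) (i+1) = 0"
      by (simp_all add: coeff_cheb_T_parity)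
    then show ?thesis by (simp add: eval_nat_numeral coeff_cheb_T_top)
  qed
  also have "\<dots> = 2 ^ i * (c (i+1) - (real i + 3) * c (i+3)
                            + (real i + 5) * (real i + 2) / 2 * c (i+5))"
    by (simp only: coeff_cheb_T_top_minus_2 coeff_cheb_T_top_minus_4) (simp add: algebra_simps)
  finally show ?thesis by (simp add: j eval_nat_numeral algebra_simps)
qed


section \<open>Taylor shift and the even polynomial Q(x + delta)\<close>

lemma coeff_taylor_shift:
  fixes p :: "'a::comm_semiring_1 poly"
  assumes "degree p \<le> j + t"
  shows "coeff (p \<circ>\<^sub>p [:a, 1:]) j = (\<Sum>s\<le>t. of_nat ((j+s) choose s) * a ^ s * coeff p (j+s))"
proof -
  have "p \<circ>\<^sub>p [:a, 1:] = (\<Sum>k\<le>degree p. [:coeff p k:] * [:a, 1:] ^ k)"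
    unfolding pcompose_altdef poly_altdef by (simp add: degree_map_poly coeff_map_poly)
  also have "\<dots> = (\<Sum>k\<le>j+t. [:coeff p k:] * [:a, 1:] ^ k)"
    using assms by (intro sum.mono_neutral_left) (auto simp: coeff_eq_0)
  finally have "coeff (p \<circ>\<^sub>p [:a, 1:]) j = (\<Sum>k\<le>j+t. coeff p k * coeff ([:a, 1:] ^ k) j)"
    by (simp add: coeff_sum)
  also have "\<dots> = (\<Sum>s\<le>t. coeff p (j+s) * coeff ([:a, 1:] ^ (j+s)) j)"
    by (rule sum_atMost_shift) (simp add: coeff_eq_0 degree_linear_power)
  also have "\<dots> = (\<Sum>s\<le>t. of_nat ((j+s) choose s) * a ^ s * coeff p (j+s))"
    by (intro sum.cong refl)
      (simp add: coeff_linear_poly_power binomial_symmetric[of j "j+_"] mult_ac)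
  finally show ?thesis .
qed

lemma real_binomial_pochhammer: "real ((j + s) choose s) = pochhammer (real j + 1) s / fact s"
  by (simp add: binomial_gbinomial gbinomial_pochhammer')

lemma coeff_taylor_shift_5:
  fixes p :: "real poly"
  assumes "degree p \<le> j + 5"
  defines "J \<equiv> real j"
  shows "coeff (p \<circ>\<^sub>p [:a, 1:]) j = coeff p j + (J+1) * a * coeff p (j+1)
     + (J+2)*(J+1)/2 * a^2 * coeff p (j+2) + (J+3)*(J+2)*(J+1)/6 * a^3 * coeff p (j+3)
     + (J+4)*(J+3)*(J+2)*(J+1)/24 * a^4 * coeff p (j+4)
     + (J+5)*(J+4)*(J+3)*(J+2)*(J+1)/120 * a^5 * coeff p (j+5)"
  unfolding coeff_taylor_shift[OF assms(1)] real_binomial_pochhammer J_def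
  by (simp add: eval_nat_numeral pochhammer_Suc field_simps)

lemma coeff_pcompose_square_odd:
  fixes R :: "'a::comm_ring_1 poly"
  assumes "odd j"
  shows "coeff (R \<circ>\<^sub>p [:0, 0, 1:]) j = 0"
  using assms
proof (induction R arbitrary: j)
  case (pCons a R)
  from pCons.prems consider "j = 1" | k where "j = Suc (Suc k)" "odd k"
    by (metis One_nat_def dvd_0_right even_Suc not0_implies_Suc)
  then show ?case
    by cases (simp_all add: pCons.IH pcompose_pCons coeff_pCons)
qed simp

text \<open>If Q = R((x - d)^2), then Q(x + d) = R(x^2) is even.\<close>
lemma shifted_square_comp_odd_coeff:
  fixes R :: "'a::comm_ring_1 poly"
  assumes "odd j"
  shows "coeff ((R \<circ>\<^sub>p [:- d, 1:] ^ 2) \<circ>\<^sub>p [:d, 1:]) j = 0"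
proof -
  have sq: "[:- d, 1:] ^ 2 \<circ>\<^sub>p [:d, 1:] = [:0, 0, 1:]"
    by (simp add: power2_eq_square pcompose_mult pcompose_pCons)
  then have "(R \<circ>\<^sub>p [:- d, 1:] ^ 2) \<circ>\<^sub>p [:d, 1:] = R \<circ>\<^sub>p [:0, 0, 1:]"
    by (simp only: pcompose_assoc[symmetric] sq)
  with assms show ?thesis by (simp add: coeff_pcompose_square_odd)
qed


section \<open>Algebraic integers\<close>

lemma sum_even_part:
  fixes h :: "nat \<Rightarrow> 'a::comm_monoid_add"
  assumes "\<And>i. h (2*i+1) = 0"
  shows "(\<Sum>j<2*n. h j) = (\<Sum>i<n. h (2*i))"
  by (induction n) (simp_all add: assms[simplified] add.assoc)

text \<open>If p is a monic integer polynomial with p(x) = 0, then F(y) = p(y) p(-y) is an even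
  monic (up to sign) integer polynomial, i.e. F(y) = +-G(y^2) with G monic, and G(x^2) = 0.\<close>
lemma algebraic_int_square:
  fixes x :: "'a::field_char_0"
  assumes "algebraic_int x"
  shows "algebraic_int (x^2)"
proof -
  obtain p where p: "lead_coeff p = 1" "\<And>i. coeff p i \<in> \<int>" "poly p x = 0"
    using assms by (auto elim: algebraic_int.cases)
  define d where "d = degree p"
  define F where "F = p * (p \<circ>\<^sub>p [:0, -1:])"
  have F_int: "coeff F i \<in> \<int>" for i
    unfolding F_def using p(2)
    by (intro coeff_mult_semiring_closed coeff_pcompose_semiring_closed)
       (auto simp: coeff_pCons split: nat.splits)
  have q_deg: "degree (p \<circ>\<^sub>p [:0, -1:]) = d"
    by (simp add: degree_pcompose d_def)
  have q_lead: "lead_coeff (p \<circ>\<^sub>p [:0, -1:]) = (-1) ^ d"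
    using p(1) by (subst lead_coeff_comp) (auto simp: d_def)
  have "p \<noteq> 0" "p \<circ>\<^sub>p [:0, -1:] \<noteq> 0"
    using p(1) q_lead by auto
  then have F_deg: "degree F = 2 * d"
    by (simp add: F_def degree_mult_eq q_deg d_def)
  have F_lead: "coeff F (2 * d) = (-1) ^ d"
    using lead_coeff_mult[of p "p \<circ>\<^sub>p [:0, -1:]"] F_deg p(1) q_lead
    by (simp add: F_def)
  have "F \<circ>\<^sub>p [:0, -1:] = F"
  proof -
    have "[:0, -1::'a:] \<circ>\<^sub>p [:0, -1:] = [:0, 1:]" by (simp add: pcompose_pCons)
    then show ?thesis
      by (simp add: F_def pcompose_mult pcompose_assoc[symmetric] mult.commute)
  qed
  then have F_odd: "coeff F (2*i+1) = 0" for i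
    using coeff_pcompose_linear[of F "-1" "2*i+1"] by simp
  define G where "G = (\<Sum>i\<le>d. monom ((-1)^d * coeff F (2*i)) i)"
  have G_coeff: "coeff G i = (if i \<le> d then (-1)^d * coeff F (2*i) else 0)" for i
    unfolding G_def by (simp add: coeff_sum coeff_monom)
  have G_deg: "degree G = d"
  proof (rule antisym)
    show "degree G \<le> d" by (rule degree_le) (simp add: G_coeff)
    show "d \<le> degree G" by (rule le_degree) (simp add: G_coeff F_lead)
  qed
  have "poly G (x^2) = (\<Sum>i\<le>d. coeff G i * (x^2) ^ i)"
    by (simp add: poly_altdef G_deg)
  also have "\<dots> = (-1)^d * (\<Sum>i<Suc d. coeff F (2*i) * x ^ (2*i))"
    by (simp add: G_coeff sum_distrib_left power_mult lessThan_Suc_atMost mult.assoc)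
  also have "(\<Sum>i<Suc d. coeff F (2*i) * x ^ (2*i)) = (\<Sum>j<2 * Suc d. coeff F j * x ^ j)"
    by (rule sum_even_part[symmetric]) (simp add: F_odd[simplified])
  also have "\<dots> = poly F x"
    by (simp add: poly_altdef F_deg lessThan_Suc_atMost[symmetric] F_odd[simplified])
  also have "\<dots> = 0" by (simp add: F_def p(3))
  finally have "poly G (x^2) = 0" by simp
  moreover have "lead_coeff G = 1" using G_deg G_coeff F_lead by simp
  moreover have "coeff G i \<in> \<int>" for i using F_int by (simp add: G_coeff)
  ultimately show ?thesis by (intro algebraic_int.intros) auto
qed

lemma map_poly_of_int_add:
  "map_poly (of_int :: int \<Rightarrow> 'a::comm_ring_1) (p + q) = map_poly of_int p + map_poly of_int q"
  by (intro poly_eqI) (simp add: coeff_map_poly)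

lemma map_poly_of_int_smult:
  "map_poly (of_int :: int \<Rightarrow> 'a::comm_ring_1) (smult c p) = smult (of_int c) (map_poly of_int p)"
  by (intro poly_eqI) (simp add: coeff_map_poly)

lemma map_poly_of_int_mult:
  "map_poly (of_int :: int \<Rightarrow> 'a::comm_ring_1) (p * q) = map_poly of_int p * map_poly of_int q"
  by (induction p) (simp_all add: map_poly_pCons map_poly_of_int_add map_poly_of_int_smult)

lemma int_poly_linear_irrational_root:
  fixes r :: "int poly" and u :: real
  assumes "degree r \<le> 1" and "poly (map_poly of_int r) u = 0" and "u \<notin> \<rat>"
  shows "r = 0"
proof -
  have r: "r = [:coeff r 0, coeff r 1:]"
    using assms(1) by (intro poly_eqI) (auto simp: coeff_pCons coeff_eq_0 split: nat.splits)
  have "map_poly (of_int :: int \<Rightarrow> real) r = [:of_int (coeff r 0), of_int (coeff r 1):]"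
    using assms(1)
    by (intro poly_eqI) (auto simp: coeff_map_poly coeff_pCons coeff_eq_0 split: nat.splits)
  then have lin: "of_int (coeff r 0) + of_int (coeff r 1) * u = 0"
    using assms(2) by (simp add: mult.commute)
  show ?thesis
  proof (cases "coeff r 1 = 0")
    case True
    with lin have "coeff r 0 = 0" by simp
    with True r show ?thesis by simp
  next
    case False
    with lin have "u = - of_int (coeff r 0) / of_int (coeff r 1)"
      by (simp add: field_simps)
    with assms(3) show ?thesis by simp
  qed
qed

text \<open>Gauss' lemma in the form needed: a factor g of a nonzero multiple of a monic integer
  polynomial has its leading coefficient dividing its content.\<close>
lemma lead_coeff_dvd_content_of_factor:
  fixes f g q :: "int poly"
  assumes "lead_coeff f = 1" and "smult a f = g * q" and "a \<noteq> 0"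
  shows "lead_coeff g dvd content g"
proof -
  have "\<bar>content f\<bar> = 1"
    using content_dvd_coeff[of f "degree f"] assms(1) by (simp add: is_unit_content_iff)
  then have "content f = 1"
    using normalize_content[of f] by simp
  then have "\<bar>a\<bar> = content g * content q"
    using arg_cong[OF assms(2), of content] by (simp add: content_mult)
  moreover have "a = lead_coeff g * lead_coeff q"
    using arg_cong[OF assms(2), of lead_coeff] assms(1,3) by (simp add: lead_coeff_mult)
  then have "lead_coeff g * content q dvd a"
    by (simp add: content_dvd_coeff)
  ultimately have "lead_coeff g * content q dvd content g * content q"
    by (metis dvd_abs_iff)
  moreover have "q \<noteq> 0"
    using assms by auto
  then have "content q \<noteq> 0" by simp
  ultimately show ?thesis by simp
qed

text \<open>Let u be an irrational algebraic integer root of A u^2 + B u + C, and f a monic integer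
  polynomial with f(u) = 0.  Pseudo-dividing f by g = A x^2 + B x + C leaves a remainder of
  degree at most one vanishing at u, hence zero; so g divides a multiple of f, and A divides
  the content of g, which divides C.\<close>
lemma algebraic_int_quadratic_dvd:
  fixes u :: real and A B C :: int
  assumes alg: "algebraic_int u" and irr: "u \<notin> \<rat>"
    and root: "of_int A * u^2 + of_int B * u + of_int C = 0" and "A \<noteq> 0"
  shows "A dvd C"
proof -
  obtain f :: "int poly" where f: "poly (map_poly of_int f) u = 0" "lead_coeff f = 1"
    using alg by (auto simp: algebraic_int_altdef_ipoly)
  define g where "g = [:C, B, A:]"
  have g_deg: "degree g = 2" and g_lead: "lead_coeff g = A" and "g \<noteq> 0"
    using \<open>A \<noteq> 0\<close> by (simp_all add: g_def numeral_2_eq_2)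
  have g_root: "poly (map_poly of_int g) u = 0"
    using root by (simp add: g_def map_poly_pCons algebra_simps power2_eq_square)
  obtain q r where qr: "pseudo_divmod f g = (q, r)" by (cases "pseudo_divmod f g") auto
  define k where "k = Suc (degree f) - degree g"
  have division: "smult (A ^ k) f = g * q + r"
    using pseudo_divmod(1)[OF \<open>g \<noteq> 0\<close> qr] g_lead by (simp add: k_def)
  have "r = 0"
  proof (rule int_poly_linear_irrational_root[OF _ _ irr])
    show "degree r \<le> 1"
      using pseudo_divmod(2)[OF \<open>g \<noteq> 0\<close> qr] g_deg by auto
    have "poly (map_poly (of_int :: int \<Rightarrow> real) (smult (A ^ k) f)) u = 0"
      by (simp add: map_poly_of_int_smult f(1))
    then show "poly (map_poly of_int r) u = 0"
      unfolding division by (simp add: map_poly_of_int_add map_poly_of_int_mult g_root)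
  qed
  with division have "smult (A ^ k) f = g * q" by simp
  then have "A dvd content g"
    using lead_coeff_dvd_content_of_factor[OF f(2)] g_lead \<open>A \<noteq> 0\<close> by auto
  also have "content g dvd C"
    using content_dvd_coeff[of g 0] by (simp add: g_def)
  finally show ?thesis .
qed

text \<open>The relation of part 1 makes x^2 a rational number strictly between 0 and 1.\<close>
lemma not_algebraic_int_of_quadratic_relation:
  fixes x :: real and m :: nat
  assumes "(real m + 4) * (real m + 5) * x^2 = 12"
  shows "\<not> algebraic_int x"
proof
  assume "algebraic_int x"
  then have alg: "algebraic_int (x^2)" by (rule algebraic_int_square)
  define N where "N = (real m + 4) * (real m + 5)"
  have N: "N \<ge> 20"
    using mult_mono[of 4 "real m + 4" 5 "real m + 5"] by (simp add: N_def)
  have x2: "x^2 = 12 / N"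
    using assms N by (simp add: N_def eq_divide_eq mult.commute)
  then have "x^2 \<in> \<rat>" by (simp add: N_def)
  with alg have "x^2 \<in> \<int>" by (rule rational_algebraic_int_is_int)
  then obtain z :: int where z: "x^2 = of_int z" by (elim Ints_cases)
  have "0 < x^2" and "x^2 < 1"
    using x2 N by simp_all
  then have "0 < z" and "z < 1"
    unfolding z by simp_all
  then show False by simp
qed

text \<open>The relation of part 2 for u = x^2: an integer u would make the left-hand side positive,
  and an irrational u would force A = (m+5)(m+4)(m+3)(m+2) \<ge> 1680 to divide 120.\<close>
lemma not_algebraic_int_of_quartic_relation:
  fixes u :: real and m :: nat
  assumes "3 \<le> m"
    and rel: "120 - 30 * (real m + 4) * (real m + 3) * u
              + (real m + 5) * (real m + 4) * (real m + 3) * (real m + 2) * u^2 = 0"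
  shows "\<not> algebraic_int u"
proof
  assume alg: "algebraic_int u"
  define A where "A = (m + 5) * (m + 4) * (m + 3) * (m + 2)"
  define B where "B = 30 * (m + 4) * (m + 3)"
  have A_ge: "A \<ge> 8 * 7 * 6 * 5"
    using \<open>3 \<le> m\<close> unfolding A_def by (intro mult_mono) auto
  have "30 \<le> (m + 5) * (m + 2)"
    using \<open>3 \<le> m\<close> mult_mono[of 8 "m + 5" 5 "m + 2"] by simp
  then have "30 * ((m + 4) * (m + 3)) \<le> ((m + 5) * (m + 2)) * ((m + 4) * (m + 3))"
    by (rule mult_right_mono) simp
  then have A_B: "B \<le> A"
    unfolding A_def B_def by (simp only: ac_simps)
  have rel': "real A * u^2 - real B * u + 120 = 0"
    using rel by (simp add: A_def B_def algebra_simps)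
  show False
  proof (cases "u \<in> \<rat>")
    case True
    with alg have "u \<in> \<int>" by (rule rational_algebraic_int_is_int)
    then obtain z :: int where z: "u = of_int z" by (elim Ints_cases)
    have "u * (real A * u - real B) \<ge> 0"
    proof (cases "z \<ge> 1")
      case True
      then have "real A \<le> real A * u"
        using z mult_left_mono[of 1 u "real A"] by simp
      then have "real A * u - real B \<ge> 0"
        using A_B by linarith
      then show ?thesis using True z by simp
    next
      case False
      then have "u \<le> 0" using z by simp
      moreover have "real A * u \<le> 0"
        using \<open>u \<le> 0\<close> by (simp add: mult_nonneg_nonpos)
      then have "real A * u - real B \<le> 0" by simp
      ultimately show ?thesis by (simp add: mult_nonpos_nonpos)
    qed
    with rel' show False by (simp add: power2_eq_square algebra_simps)
  next
    case False
    have "of_int (int A) * u^2 + of_int (- int B) * u + of_int 120 = 0"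
      using rel' by simp
    moreover have "int A \<noteq> 0" using A_ge by simp
    ultimately have "int A dvd 120"
      by (rule algebraic_int_quadratic_dvd[OF alg False])
    then have "int A \<le> 120" by (rule zdvd_imp_le) simp
    with A_ge show False by simp
  qed
qed


section \<open>The top Chebyshev coefficients of Q with Q(x + delta) even\<close>

context
  fixes Q :: "real poly" and \<delta> :: real and m :: nat
  assumes deg: "degree Q = m + 6" and even_m: "even m"
    and odd_vanish: "\<And>j. odd j \<Longrightarrow> coeff (Q \<circ>\<^sub>p [:\<delta>, 1:]) j = 0"
begin

lemma top_coeffs:
  defines "c \<equiv> \<lambda>k. cheb_coeffs Q (m + k)" and "M \<equiv> real m" and "e \<equiv> (2::real) ^ m"
  shows "coeff Q (m+6) = 32 * e * c 6"
    and "coeff Q (m+5) = 16 * e * c 5"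
    and "coeff Q (m+4) = 8 * e * (c 4 - (M+6) * c 6)"
    and "coeff Q (m+3) = 4 * e * (c 3 - (M+5) * c 5)"
    and "coeff Q (m+2) = 2 * e * (c 2 - (M+4) * c 4 + (M+6) * (M+3) / 2 * c 6)"
    and "coeff Q (m+1) = e * (c 1 - (M+3) * c 3 + (M+5) * (M+2) / 2 * c 5)"
proof -
  note top = coeff_top_in_cheb_basis[of "m + k" Q for k]
  have zero: "cheb_coeffs Q k = 0" if "m + 6 < k" for k
    using that deg by (simp add: cheb_coeffs_above_degree)
  note simps = c_def M_def e_def deg power_add zero
  show "coeff Q (m+6) = 32 * e * c 6"
    using top[of 6] by (simp add: simps)
  show "coeff Q (m+5) = 16 * e * c 5"
    using top[of 5] by (simp add: simps)
  show "coeff Q (m+4) = 8 * e * (c 4 - (M+6) * c 6)"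
    using top[of 4] by (simp add: simps algebra_simps)
  show "coeff Q (m+3) = 4 * e * (c 3 - (M+5) * c 5)"
    using top[of 3] by (simp add: simps algebra_simps)
  have idx2: "m + 2 + 2 = m + 4" "m + 2 + 4 = m + 6" by simp_all
  show "coeff Q (m+2) = 2 * e * (c 2 - (M+4) * c 4 + (M+6) * (M+3) / 2 * c 6)"
    using top[of 2, unfolded idx2] by (simp add: simps algebra_simps del: add_2_eq_Suc')
  have idx1: "m + 1 + 2 = m + 3" "m + 1 + 4 = m + 5" by simp_all
  show "coeff Q (m+1) = e * (c 1 - (M+3) * c 3 + (M+5) * (M+2) / 2 * c 5)"
    using top[of 1, unfolded idx1] by (simp add: simps algebra_simps)
qed

lemma shifted_odd_coeffs:
  defines "q \<equiv> \<lambda>k. coeff Q (m + k)" and "M \<equiv> real m"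
  shows "q 5 + (M+6) * \<delta> * q 6 = 0"
    and "q 3 + (M+4) * \<delta> * q 4 + (M+5)*(M+4)/2 * \<delta>^2 * q 5
         + (M+6)*(M+5)*(M+4)/6 * \<delta>^3 * q 6 = 0"
    and "q 1 + (M+2) * \<delta> * q 2 + (M+3)*(M+2)/2 * \<delta>^2 * q 3 + (M+4)*(M+3)*(M+2)/6 * \<delta>^3 * q 4
         + (M+5)*(M+4)*(M+3)*(M+2)/24 * \<delta>^4 * q 5
         + (M+6)*(M+5)*(M+4)*(M+3)*(M+2)/120 * \<delta>^5 * q 6 = 0"
proof -
  have odd5: "coeff (Q \<circ>\<^sub>p [:\<delta>, 1:]) (m + 5) = 0"
    and odd3: "coeff (Q \<circ>\<^sub>p [:\<delta>, 1:]) (m + 3) = 0"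
    and odd1: "coeff (Q \<circ>\<^sub>p [:\<delta>, 1:]) (m + 1) = 0"
    using even_m by (simp_all add: odd_vanish)
  note taylor = coeff_taylor_shift_5[of Q "m + k" \<delta> for k]
  have zero: "coeff Q k = 0" if "m + 6 < k" for k
    using that deg by (simp add: coeff_eq_0)
  note simps = q_def M_def deg zero algebra_simps
  show "q 5 + (M+6) * \<delta> * q 6 = 0"
    using taylor[of 5] odd5 by (simp add: simps)
  show "q 3 + (M+4) * \<delta> * q 4 + (M+5)*(M+4)/2 * \<delta>^2 * q 5
        + (M+6)*(M+5)*(M+4)/6 * \<delta>^3 * q 6 = 0"
    using taylor[of 3] odd3 by (simp add: simps)
  have idx1: "m + 1 + 1 = m + 2" "m + 1 + 2 = m + 3" "m + 1 + 3 = m + 4" "m + 1 + 4 = m + 5"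
    "m + 1 + 5 = m + 6" by simp_all
  show "q 1 + (M+2) * \<delta> * q 2 + (M+3)*(M+2)/2 * \<delta>^2 * q 3 + (M+4)*(M+3)*(M+2)/6 * \<delta>^3 * q 4
        + (M+5)*(M+4)*(M+3)*(M+2)/24 * \<delta>^4 * q 5
        + (M+6)*(M+5)*(M+4)*(M+3)*(M+2)/120 * \<delta>^5 * q 6 = 0"
    using taylor[of 1, unfolded idx1] odd1 by (simp add: simps)
qed

lemma top_cheb_coeff_nonzero: "cheb_coeffs Q (m + 6) \<noteq> 0"
proof
  assume "cheb_coeffs Q (m + 6) = 0"
  then have "lead_coeff Q = 0" using top_coeffs(1) deg by simp
  then have "Q = 0" by simp
  then show False using deg by simp
qed

text \<open>Eliminating the monomial coefficients from the first two equations of (b), given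
  Ch_2(Q) = c_4 = 0: the Chebyshev coefficients c_5, c_3 are determined by c_6.\<close>
lemma cheb_coeffs_relations:
  defines "c \<equiv> \<lambda>k. cheb_coeffs Q (m + k)" and "M \<equiv> real m"
  assumes c4: "c 4 = 0"
  shows "c 5 = -2 * (M+6) * \<delta> * c 6"
    and "c 3 = 2 * (M+6) * \<delta> * c 6 * (4/3 * (M+5) * (M+4) * \<delta>^2 - 1)"
proof -
  have "2 ^ m * 16 * (c 5 + 2 * (M+6) * \<delta> * c 6) = 0"
    using shifted_odd_coeffs(1) unfolding top_coeffs M_def by (simp add: c_def algebra_simps)
  then have "c 5 + 2 * (M+6) * \<delta> * c 6 = 0" by simp
  then show c5: "c 5 = -2 * (M+6) * \<delta> * c 6" by linarith
  have c4': "cheb_coeffs Q (m + 4) = 0"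
    and c5': "cheb_coeffs Q (m + 5) = -2 * (M+6) * \<delta> * cheb_coeffs Q (m + 6)"
    using c4 c5 by (simp_all add: c_def)
  have "2 ^ m * 4 * (c 3 - 2 * (M+6) * \<delta> * c 6 * (4/3 * (M+5) * (M+4) * \<delta>^2 - 1)) = 0"
    using shifted_odd_coeffs(2) unfolding top_coeffs c4' c5' M_def
    by (simp add: c_def field_simps power2_eq_square power3_eq_cube)
  then show "c 3 = 2 * (M+6) * \<delta> * c 6 * (4/3 * (M+5) * (M+4) * \<delta>^2 - 1)"
    by simp
qed

lemma quadratic_relation:
  assumes c4: "cheb_coeffs Q (m + 4) = 0" and c3: "cheb_coeffs Q (m + 3) = 0" and "\<delta> \<noteq> 0"
  shows "(real m + 4) * (real m + 5) * (4 * \<delta>)^2 = 12"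
proof -
  have "2 * (real m + 6) * \<delta> * cheb_coeffs Q (m + 6)
        * (4/3 * (real m + 5) * (real m + 4) * \<delta>^2 - 1) = 0"
    using cheb_coeffs_relations(2) c3 c4 by simp
  then have "4/3 * (real m + 5) * (real m + 4) * \<delta>^2 - 1 = 0"
    using top_cheb_coeff_nonzero \<open>\<delta> \<noteq> 0\<close> by simp
  then show ?thesis by (simp add: field_simps power2_eq_square)
qed

text \<open>Part 2: Ch_2(Q) = Ch_4(Q) = Ch_5(Q) = 0 and delta \<noteq> 0 give, after substituting
  c_5, c_3 into the third equation of (b), a quadratic relation for u = (4 delta)^2.\<close>
lemma quartic_relation:
  assumes c4: "cheb_coeffs Q (m + 4) = 0" and c2: "cheb_coeffs Q (m + 2) = 0"
    and c1: "cheb_coeffs Q (m + 1) = 0" and "\<delta> \<noteq> 0"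
  defines "M \<equiv> real m" and "u \<equiv> (4 * \<delta>)^2"
  shows "120 - 30 * (M + 4) * (M + 3) * u + (M + 5) * (M + 4) * (M + 3) * (M + 2) * u^2 = 0"
proof -
  note c5 = cheb_coeffs_relations(1)[OF c4]
  note c3 = cheb_coeffs_relations(2)[OF c4]
  have "2 ^ m * cheb_coeffs Q (m + 6) * \<delta> * (M+6) / 60
      * (120 - 30 * (M + 4) * (M + 3) * u + (M + 5) * (M + 4) * (M + 3) * (M + 2) * u^2) = 0"
    using shifted_odd_coeffs(3) unfolding top_coeffs c1 c2 c3 c4 c5 M_def u_def
    by (simp add: field_simps eval_nat_numeral)
  moreover have "M + 6 \<noteq> 0" by (simp add: M_def)
  ultimately show ?thesis
    using top_cheb_coeff_nonzero \<open>\<delta> \<noteq> 0\<close> by simp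
qed

lemma not_algebraic_int_part_1:
  assumes "cheb_coeffs Q (m + 4) = 0" and "cheb_coeffs Q (m + 3) = 0" and "\<delta> \<noteq> 0"
  shows "\<not> algebraic_int (4 * \<delta>)"
  using quadratic_relation[OF assms] by (rule not_algebraic_int_of_quadratic_relation)

lemma not_algebraic_int_part_2:
  assumes "3 \<le> m" and "cheb_coeffs Q (m + 4) = 0" and "cheb_coeffs Q (m + 2) = 0"
    and "cheb_coeffs Q (m + 1) = 0" and "\<delta> \<noteq> 0"
  shows "\<not> algebraic_int (4 * \<delta>)"
proof -
  have "\<not> algebraic_int ((4 * \<delta>)^2)"
    using \<open>3 \<le> m\<close> quartic_relation[OF assms(2-5)]
    by (rule not_algebraic_int_of_quartic_relation)
  then show ?thesis using algebraic_int_square by blast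
qed

end


theorem corollary3p3:
  fixes R :: "real poly" and \<delta> :: real and Q :: "real poly" and n :: nat
  assumes hQ: "Q = R \<circ>\<^sub>p ([:- \<delta>, 1:] ^ 2)"
    and hn: "n = degree Q"
  shows "(n \<ge> 6 \<and> Ch 2 Q = 0 \<and> Ch 3 Q = 0 \<and> \<delta> \<noteq> 0
            \<longrightarrow> \<not> algebraic_int (complex_of_real (4 * \<delta>)))
       \<and> (n \<ge> 9 \<and> Ch 2 Q = 0 \<and> Ch 4 Q = 0 \<and> Ch 5 Q = 0 \<and> \<delta> \<noteq> 0
            \<longrightarrow> \<not> algebraic_int (complex_of_real (4 * \<delta>)))"
proof -
  have odd_vanish: "coeff (Q \<circ>\<^sub>p [:\<delta>, 1:]) j = 0" if "odd j" for j
    unfolding hQ using that by (rule shifted_square_comp_odd_coeff)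
  have "even n"
    by (simp add: hn hQ degree_pcompose degree_linear_power)
  define m where "m = n - 6"
  have top_index: "degree Q = m + 6" "even m" if "6 \<le> n"
    using that \<open>even n\<close> by (simp_all add: m_def hn)
  have Ch: "Ch k Q = cheb_coeffs Q (m + (6 - k))" if "6 \<le> n" "k \<le> 6" for k
    using that by (simp add: Ch_def hn m_def)
  show ?thesis
    unfolding algebraic_int_of_real_iff
  proof (intro conjI impI; elim conjE)
    assume "6 \<le> n" "Ch 2 Q = 0" "Ch 3 Q = 0" "\<delta> \<noteq> 0"
    then show "\<not> algebraic_int (4 * \<delta>)"
      using not_algebraic_int_part_1[OF top_index odd_vanish] Ch[of 2] Ch[of 3] by simp
  next
    assume "9 \<le> n" "Ch 2 Q = 0" "Ch 4 Q = 0" "Ch 5 Q = 0" "\<delta> \<noteq> 0"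
    moreover have "3 \<le> m" using \<open>9 \<le> n\<close> by (simp add: m_def)
    ultimately show "\<not> algebraic_int (4 * \<delta>)"
      using not_algebraic_int_part_2[OF top_index odd_vanish] Ch[of 2] Ch[of 4] Ch[of 5] by simp
  qed
qed

end
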